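(* Let $\underline{L}$ be a finite lattice and let $\underline{S}_1,\underline{S}_2$ be intervals of $\underline{L}$ that are dismantling for $\underline{L}$, with $\underline{S}_2\not\subseteq\underline{S}_1$. Then $\underline{S}_2\setminus\underline{S}_1$ is an interval of the lattice $\underline{L}\setminus\underline{S}_1$ (the set $L\setminus S_1$ with the restricted order) and it is dismantling for $\underline{L}\setminus\underline{S}_1$.
   Context: For $u\le v$ in a lattice $L$, $[u,v]=\{x\mid u\le x\le v\}$, $(v]=\{x\mid x\le v\}$, $[u)=\{x\mid u\le x\}$. An interval $[u,v]$ of $L$ is quasi-dismantling for $L$ if $u$ is supremum-prime in $(v]$ (for all $x,y\in(v]$, $u\le x\vee y$ implies $u\le x$ or $u\le y$) and $v$ is infimum-prime in $[u)$ (for all $x,y\in[u)$, $x\wedge y\le v$ implies $x\le v$ or $y\le v$); it is dismantling for $L$ if moreover $u\neq\bot$ and $v\neq\top$, the least and greatest elements of $L$. (If $[u,v]$ is dismantling for $L$, then $L\setminus[u,v]$ with the restricted order is a lattice.) *)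

theory Defs
  imports Main
begin

text \<open>A lattice is represented by a carrier set A of an ambient partial order,
  with the restricted order. Joins/meets are those computed inside A.\<close>

definition is_sup_in :: "'a::order set \<Rightarrow> 'a \<Rightarrow> 'a \<Rightarrow> 'a \<Rightarrow> bool" where
  "is_sup_in A x y s \<longleftrightarrow> s \<in> A \<and> x \<le> s \<and> y \<le> s \<and> (\<forall>z\<in>A. x \<le> z \<and> y \<le> z \<longrightarrow> s \<le> z)"

definition is_inf_in :: "'a::order set \<Rightarrow> 'a \<Rightarrow> 'a \<Rightarrow> 'a \<Rightarrow> bool" where
  "is_inf_in A x y i \<longleftrightarrow> i \<in> A \<and> i \<le> x \<and> i \<le> y \<and> (\<forall>z\<in>A. z \<le> x \<and> z \<le> y \<longrightarrow> z \<le> i)"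

definition lattice_on :: "'a::order set \<Rightarrow> bool" where
  "lattice_on A \<longleftrightarrow> A \<noteq> {} \<and>
     (\<forall>x\<in>A. \<forall>y\<in>A. (\<exists>s. is_sup_in A x y s) \<and> (\<exists>i. is_inf_in A x y i))"

definition ljoin :: "'a::order set \<Rightarrow> 'a \<Rightarrow> 'a \<Rightarrow> 'a" where
  "ljoin A x y = (THE s. is_sup_in A x y s)"

definition lmeet :: "'a::order set \<Rightarrow> 'a \<Rightarrow> 'a \<Rightarrow> 'a" where
  "lmeet A x y = (THE i. is_inf_in A x y i)"

definition lbot :: "'a::order set \<Rightarrow> 'a" where
  "lbot A = (THE b. b \<in> A \<and> (\<forall>x\<in>A. b \<le> x))"

definition ltop :: "'a::order set \<Rightarrow> 'a" where
  "ltop A = (THE t. t \<in> A \<and> (\<forall>x\<in>A. x \<le> t))"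

definition ival :: "'a::order set \<Rightarrow> 'a \<Rightarrow> 'a \<Rightarrow> 'a set" where
  "ival A u v = {x \<in> A. u \<le> x \<and> x \<le> v}"

definition downset :: "'a::order set \<Rightarrow> 'a \<Rightarrow> 'a set" where
  "downset A v = {x \<in> A. x \<le> v}"

definition upset :: "'a::order set \<Rightarrow> 'a \<Rightarrow> 'a set" where
  "upset A u = {x \<in> A. u \<le> x}"

definition is_interval :: "'a::order set \<Rightarrow> 'a set \<Rightarrow> bool" where
  "is_interval A S \<longleftrightarrow> (\<exists>u\<in>A. \<exists>v\<in>A. u \<le> v \<and> S = ival A u v)"

definition sup_prime_in :: "'a::order set \<Rightarrow> 'a \<Rightarrow> 'a set \<Rightarrow> bool" where
  "sup_prime_in A u D \<longleftrightarrow> (\<forall>x\<in>D. \<forall>y\<in>D. u \<le> ljoin A x y \<longrightarrow> u \<le> x \<or> u \<le> y)"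

definition inf_prime_in :: "'a::order set \<Rightarrow> 'a \<Rightarrow> 'a set \<Rightarrow> bool" where
  "inf_prime_in A v U \<longleftrightarrow> (\<forall>x\<in>U. \<forall>y\<in>U. lmeet A x y \<le> v \<longrightarrow> x \<le> v \<or> y \<le> v)"

definition quasi_dismantling :: "'a::order set \<Rightarrow> 'a \<Rightarrow> 'a \<Rightarrow> bool" where
  "quasi_dismantling A u v \<longleftrightarrow> u \<in> A \<and> v \<in> A \<and> u \<le> v \<and>
     sup_prime_in A u (downset A v) \<and> inf_prime_in A v (upset A u)"

definition dismantling :: "'a::order set \<Rightarrow> 'a \<Rightarrow> 'a \<Rightarrow> bool" where
  "dismantling A u v \<longleftrightarrow> quasi_dismantling A u v \<and> u \<noteq> lbot A \<and> v \<noteq> ltop A"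

definition dismantling_interval :: "'a::order set \<Rightarrow> 'a set \<Rightarrow> bool" where
  "dismantling_interval A S \<longleftrightarrow> (\<exists>u v. S = ival A u v \<and> dismantling A u v)"

end

theory Submission
  imports Defs
begin

text \<open>Primality of \<open>u\<close> and \<open>v\<close> makes \<open>L - [u,v]\<close> closed under the joins and meets of \<open>L\<close>:
  a join of two elements outside \<open>[u,v]\<close> that lands in \<open>[u,v]\<close> would put both below \<open>v\<close>,
  and then \<open>u\<close> lies below one of them. Inside the finite sublattice \<open>L - S\<^sub>1\<close> the trace
  of \<open>S\<^sub>2 = [u\<^sub>2,v\<^sub>2]\<close> is nonempty and closed under joins and meets, hence an interval
  \<open>[a,b]\<close> with \<open>u\<^sub>2 \<le> a\<close> and \<open>b \<le> v\<^sub>2\<close>; since joins and meets are computed as in \<open>L\<close>,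
  the primality of \<open>u\<^sub>2\<close>, \<open>v\<^sub>2\<close> passes to \<open>a\<close>, \<open>b\<close>. Finally the bottom and top of \<open>L\<close>
  are not removed, so \<open>a\<close> and \<open>b\<close> are not the bottom and top of \<open>L - S\<^sub>1\<close>.\<close>

definition sublattice :: "'a::order set \<Rightarrow> 'a set \<Rightarrow> bool" where
  "sublattice B L \<longleftrightarrow> B \<subseteq> L \<and> (\<forall>x\<in>B. \<forall>y\<in>B. ljoin L x y \<in> B \<and> lmeet L x y \<in> B)"

lemma ljoin_eqI: "is_sup_in A x y s \<Longrightarrow> ljoin A x y = s"
  unfolding ljoin_def by (rule the_equality) (auto simp: is_sup_in_def intro: antisym)

lemma lmeet_eqI: "is_inf_in A x y i \<Longrightarrow> lmeet A x y = i"
  unfolding lmeet_def by (rule the_equality) (auto simp: is_inf_in_def intro: antisym)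

lemma lattice_on_is_sup_in:
  assumes "lattice_on L" "x \<in> L" "y \<in> L"
  shows "is_sup_in L x y (ljoin L x y)"
proof -
  obtain s where "is_sup_in L x y s" using assms unfolding lattice_on_def by blast
  with ljoin_eqI[of L x y s] show ?thesis by simp
qed

lemma lattice_on_is_inf_in:
  assumes "lattice_on L" "x \<in> L" "y \<in> L"
  shows "is_inf_in L x y (lmeet L x y)"
proof -
  obtain i where "is_inf_in L x y i" using assms unfolding lattice_on_def by blast
  with lmeet_eqI[of L x y i] show ?thesis by simp
qed

lemma lbot_eqI: "b \<in> A \<Longrightarrow> \<forall>x\<in>A. b \<le> x \<Longrightarrow> lbot A = (b::'a::order)"
  unfolding lbot_def by (rule the_equality) (auto intro: antisym)

lemma ltop_eqI: "t \<in> A \<Longrightarrow> \<forall>x\<in>A. x \<le> t \<Longrightarrow> ltop A = (t::'a::order)"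
  unfolding ltop_def by (rule the_equality) (auto intro: antisym)

lemma finite_meet_closed_has_least:
  assumes "lattice_on L" "finite B" "B \<noteq> {}" "B \<subseteq> L"
    and closed: "\<forall>x\<in>B. \<forall>y\<in>B. lmeet L x y \<in> B"
  shows "\<exists>m\<in>B. \<forall>x\<in>B. m \<le> x"
proof -
  obtain m where m: "m \<in> B" and minimal: "\<forall>z\<in>B. z \<le> m \<longrightarrow> m = z"
    using finite_has_minimal[OF assms(2,3)] by blast
  have "m \<le> x" if "x \<in> B" for x
  proof -
    have bound: "is_inf_in L x m (lmeet L x m)"
      using lattice_on_is_inf_in assms(1,4) m that by blast
    then have "lmeet L x m = m"
      using minimal closed m that by (auto simp: is_inf_in_def)
    with bound show ?thesis by (simp add: is_inf_in_def)
  qed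
  with m show ?thesis by blast
qed

lemma finite_join_closed_has_greatest:
  assumes "lattice_on L" "finite B" "B \<noteq> {}" "B \<subseteq> L"
    and closed: "\<forall>x\<in>B. \<forall>y\<in>B. ljoin L x y \<in> B"
  shows "\<exists>m\<in>B. \<forall>x\<in>B. x \<le> m"
proof -
  obtain m where m: "m \<in> B" and maximal: "\<forall>z\<in>B. m \<le> z \<longrightarrow> m = z"
    using finite_has_maximal[OF assms(2,3)] by blast
  have "x \<le> m" if "x \<in> B" for x
  proof -
    have bound: "is_sup_in L x m (ljoin L x m)"
      using lattice_on_is_sup_in assms(1,4) m that by blast
    then have "ljoin L x m = m"
      using maximal closed m that by (auto simp: is_sup_in_def)
    with bound show ?thesis by (simp add: is_sup_in_def)
  qed
  with m show ?thesis by blast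
qed

lemma finite_lattice_on_lbot:
  assumes "finite L" "lattice_on L"
  shows "lbot L \<in> L" "\<forall>x\<in>L. lbot L \<le> x"
proof -
  have "\<forall>x\<in>L. \<forall>y\<in>L. lmeet L x y \<in> L"
    using lattice_on_is_inf_in[OF assms(2)] by (auto simp: is_inf_in_def)
  moreover have "L \<noteq> {}" using assms(2) by (simp add: lattice_on_def)
  ultimately obtain b where b: "b \<in> L" "\<forall>x\<in>L. b \<le> x"
    using finite_meet_closed_has_least[OF assms(2,1) _ subset_refl] by blast
  with lbot_eqI[OF b] show "lbot L \<in> L" "\<forall>x\<in>L. lbot L \<le> x" by simp_all
qed

lemma finite_lattice_on_ltop:
  assumes "finite L" "lattice_on L"
  shows "ltop L \<in> L" "\<forall>x\<in>L. x \<le> ltop L"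
proof -
  have "\<forall>x\<in>L. \<forall>y\<in>L. ljoin L x y \<in> L"
    using lattice_on_is_sup_in[OF assms(2)] by (auto simp: is_sup_in_def)
  moreover have "L \<noteq> {}" using assms(2) by (simp add: lattice_on_def)
  ultimately obtain t where t: "t \<in> L" "\<forall>x\<in>L. x \<le> t"
    using finite_join_closed_has_greatest[OF assms(2,1) _ subset_refl] by blast
  with ltop_eqI[OF t] show "ltop L \<in> L" "\<forall>x\<in>L. x \<le> ltop L" by simp_all
qed

lemma sublattice_ljoin:
  assumes "lattice_on L" "sublattice B L" "x \<in> B" "y \<in> B"
  shows "ljoin B x y = ljoin L x y"
proof (rule ljoin_eqI)
  show "is_sup_in B x y (ljoin L x y)"
    using lattice_on_is_sup_in[OF assms(1)] assms(2-4)
    unfolding sublattice_def is_sup_in_def by blast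
qed

lemma sublattice_lmeet:
  assumes "lattice_on L" "sublattice B L" "x \<in> B" "y \<in> B"
  shows "lmeet B x y = lmeet L x y"
proof (rule lmeet_eqI)
  show "is_inf_in B x y (lmeet L x y)"
    using lattice_on_is_inf_in[OF assms(1)] assms(2-4)
    unfolding sublattice_def is_inf_in_def by blast
qed

lemma ljoin_notin_quasi_dismantling:
  assumes "lattice_on L" "quasi_dismantling L u v" "x \<in> L" "y \<in> L"
    and "x \<notin> ival L u v" "y \<notin> ival L u v"
  shows "ljoin L x y \<notin> ival L u v"
proof
  assume join_in: "ljoin L x y \<in> ival L u v"
  have sup: "is_sup_in L x y (ljoin L x y)" using lattice_on_is_sup_in assms(1,3,4) by blast
  then have "x \<le> v" "y \<le> v" using join_in by (auto simp: ival_def is_sup_in_def intro: order_trans)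
  then have "u \<le> x \<or> u \<le> y"
    using assms(2-4) join_in
    by (auto simp: quasi_dismantling_def sup_prime_in_def downset_def ival_def)
  with assms(3-6) \<open>x \<le> v\<close> \<open>y \<le> v\<close> show False by (auto simp: ival_def)
qed

lemma lmeet_notin_quasi_dismantling:
  assumes "lattice_on L" "quasi_dismantling L u v" "x \<in> L" "y \<in> L"
    and "x \<notin> ival L u v" "y \<notin> ival L u v"
  shows "lmeet L x y \<notin> ival L u v"
proof
  assume meet_in: "lmeet L x y \<in> ival L u v"
  have inf: "is_inf_in L x y (lmeet L x y)" using lattice_on_is_inf_in assms(1,3,4) by blast
  then have "u \<le> x" "u \<le> y" using meet_in by (auto simp: ival_def is_inf_in_def intro: order_trans)
  then have "x \<le> v \<or> y \<le> v"
    using assms(2-4) meet_in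
    by (auto simp: quasi_dismantling_def inf_prime_in_def upset_def ival_def)
  with assms(3-6) \<open>u \<le> x\<close> \<open>u \<le> y\<close> show False by (auto simp: ival_def)
qed

lemma sublattice_diff_quasi_dismantling:
  assumes "lattice_on L" "quasi_dismantling L u v"
  shows "sublattice (L - ival L u v) L"
  using ljoin_notin_quasi_dismantling[OF assms] lmeet_notin_quasi_dismantling[OF assms]
    lattice_on_is_sup_in[OF assms(1)] lattice_on_is_inf_in[OF assms(1)]
  by (auto simp: sublattice_def is_sup_in_def is_inf_in_def)

lemma lbot_notin_dismantling:
  assumes "finite L" "lattice_on L" "dismantling L u v"
  shows "lbot L \<notin> ival L u v"
  using finite_lattice_on_lbot[OF assms(1,2)] assms(3)
  by (auto simp: ival_def dismantling_def quasi_dismantling_def intro: antisym)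

lemma ltop_notin_dismantling:
  assumes "finite L" "lattice_on L" "dismantling L u v"
  shows "ltop L \<notin> ival L u v"
  using finite_lattice_on_ltop[OF assms(1,2)] assms(3)
  by (auto simp: ival_def dismantling_def quasi_dismantling_def intro: antisym)

lemma sublattice_trace_is_ival:
  assumes "finite L" "lattice_on L" "sublattice B L" "u \<in> L" "v \<in> L"
    and nonempty: "{x \<in> B. u \<le> x \<and> x \<le> v} \<noteq> {}"
  shows "\<exists>a\<in>B. \<exists>b\<in>B. a \<le> b \<and> ival B a b = {x \<in> B. u \<le> x \<and> x \<le> v}"
proof -
  define T where "T = {x \<in> B. u \<le> x \<and> x \<le> v}"
  have T_sub: "T \<subseteq> L" using assms(3) by (auto simp: T_def sublattice_def)
  then have T_fin: "finite T" using assms(1) by (rule finite_subset)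
  have T_ne: "T \<noteq> {}" using nonempty by (simp add: T_def)
  have closed: "lmeet L x y \<in> T \<and> ljoin L x y \<in> T" if "x \<in> T" "y \<in> T" for x y
  proof -
    have inf: "is_inf_in L x y (lmeet L x y)"
      using that T_sub by (intro lattice_on_is_inf_in[OF assms(2)]) auto
    have sup: "is_sup_in L x y (ljoin L x y)"
      using that T_sub by (intro lattice_on_is_sup_in[OF assms(2)]) auto
    have "lmeet L x y \<in> B" "ljoin L x y \<in> B"
      using that assms(3) by (auto simp: T_def sublattice_def)
    with inf sup that assms(4,5) show ?thesis
      unfolding T_def is_inf_in_def is_sup_in_def by (blast intro: order_trans)
  qed
  obtain a where a: "a \<in> T" "\<forall>x\<in>T. a \<le> x"
    using finite_meet_closed_has_least[OF assms(2) T_fin T_ne T_sub] closed by blast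
  obtain b where b: "b \<in> T" "\<forall>x\<in>T. x \<le> b"
    using finite_join_closed_has_greatest[OF assms(2) T_fin T_ne T_sub] closed by blast
  have "ival B a b = T"
    using a b unfolding T_def ival_def by (auto intro: order_trans)
  with a b show ?thesis unfolding T_def by auto
qed

lemma quasi_dismantling_sublattice_trace:
  assumes "lattice_on L" "sublattice B L" "quasi_dismantling L u v"
    and ab: "a \<in> B" "b \<in> B" "a \<le> b"
    and trace: "ival B a b = {x \<in> B. u \<le> x \<and> x \<le> v}"
  shows "quasi_dismantling B a b"
proof -
  have B_sub: "B \<subseteq> L" using assms(2) by (simp add: sublattice_def)
  have "a \<in> ival B a b" "b \<in> ival B a b" using ab by (auto simp: ival_def)
  then have ua: "u \<le> a" and bv: "b \<le> v" using trace by auto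
  have "sup_prime_in B a (downset B b)"
    unfolding sup_prime_in_def
  proof (intro ballI impI)
    fix x y assume "x \<in> downset B b" "y \<in> downset B b" and a_join: "a \<le> ljoin B x y"
    then have xy: "x \<in> B" "y \<in> B" "x \<le> v" "y \<le> v"
      using bv by (auto simp: downset_def intro: order_trans)
    have "u \<le> ljoin L x y"
      using a_join ua sublattice_ljoin[OF assms(1,2) xy(1,2)] by (metis order_trans)
    then have "u \<le> x \<or> u \<le> y"
      using assms(3) xy B_sub by (auto simp: quasi_dismantling_def sup_prime_in_def downset_def)
    then have "x \<in> ival B a b \<or> y \<in> ival B a b" using trace xy by auto
    then show "a \<le> x \<or> a \<le> y" by (auto simp: ival_def)
  qed
  moreover have "inf_prime_in B b (upset B a)"
    unfolding inf_prime_in_def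
  proof (intro ballI impI)
    fix x y assume "x \<in> upset B a" "y \<in> upset B a" and meet_b: "lmeet B x y \<le> b"
    then have xy: "x \<in> B" "y \<in> B" "u \<le> x" "u \<le> y"
      using ua by (auto simp: upset_def intro: order_trans)
    have "lmeet L x y \<le> v"
      using meet_b bv sublattice_lmeet[OF assms(1,2) xy(1,2)] by (metis order_trans)
    then have "x \<le> v \<or> y \<le> v"
      using assms(3) xy B_sub by (auto simp: quasi_dismantling_def inf_prime_in_def upset_def)
    then have "x \<in> ival B a b \<or> y \<in> ival B a b" using trace xy by auto
    then show "x \<le> b \<or> y \<le> b" by (auto simp: ival_def)
  qed
  ultimately show ?thesis using ab by (simp add: quasi_dismantling_def)
qed

lemma dismantling_sublattice_trace:
  assumes "finite L" "lattice_on L" "sublattice B L" "dismantling L u v"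
    and bounds: "lbot L \<in> B" "ltop L \<in> B"
    and ab: "a \<in> B" "b \<in> B" "a \<le> b"
    and trace: "ival B a b = {x \<in> B. u \<le> x \<and> x \<le> v}"
  shows "dismantling B a b"
proof -
  have qd: "quasi_dismantling L u v" and u: "u \<in> L" "u \<noteq> lbot L" and v: "v \<in> L" "v \<noteq> ltop L"
    using assms(4) by (auto simp: dismantling_def quasi_dismantling_def)
  have B_sub: "B \<subseteq> L" using assms(3) by (simp add: sublattice_def)
  have lbot_B: "lbot B = lbot L"
    using bounds(1) B_sub finite_lattice_on_lbot(2)[OF assms(1,2)] by (intro lbot_eqI) auto
  have ltop_B: "ltop B = ltop L"
    using bounds(2) B_sub finite_lattice_on_ltop(2)[OF assms(1,2)] by (intro ltop_eqI) auto
  have "a \<in> ival B a b" "b \<in> ival B a b" using ab by (auto simp: ival_def)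
  then have "u \<le> a" "b \<le> v" using trace by auto
  then have "a \<noteq> lbot L" "b \<noteq> ltop L"
    using u v finite_lattice_on_lbot(2)[OF assms(1,2)] finite_lattice_on_ltop(2)[OF assms(1,2)]
    by (metis antisym)+
  with quasi_dismantling_sublattice_trace[OF assms(2,3) qd ab trace] lbot_B ltop_B
  show ?thesis by (simp add: dismantling_def)
qed

theorem lemma5:
  fixes L S1 S2 :: "'a::order set"
  assumes "finite L" and "lattice_on L"
    and "dismantling_interval L S1" and "dismantling_interval L S2"
    and "\<not> S2 \<subseteq> S1"
  shows "is_interval (L - S1) (S2 - S1) \<and> dismantling_interval (L - S1) (S2 - S1)"
proof -
  obtain u1 v1 where S1: "S1 = ival L u1 v1" and d1: "dismantling L u1 v1"
    using assms(3) unfolding dismantling_interval_def by blast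
  obtain u2 v2 where S2: "S2 = ival L u2 v2" and d2: "dismantling L u2 v2"
    using assms(4) unfolding dismantling_interval_def by blast
  have sub: "sublattice (L - S1) L"
    using sublattice_diff_quasi_dismantling[OF assms(2)] d1 unfolding S1 dismantling_def by blast
  have uv2: "u2 \<in> L" "v2 \<in> L" using d2 by (auto simp: dismantling_def quasi_dismantling_def)
  have trace: "S2 - S1 = {x \<in> L - S1. u2 \<le> x \<and> x \<le> v2}"
    by (auto simp: S2 ival_def)
  have "S2 - S1 \<noteq> {}" using assms(5) by blast
  then obtain a b where ab: "a \<in> L - S1" "b \<in> L - S1" "a \<le> b"
    and ival_ab: "ival (L - S1) a b = S2 - S1"
    using sublattice_trace_is_ival[OF assms(1,2) sub uv2] unfolding trace by blast
  have "lbot L \<in> L - S1" "ltop L \<in> L - S1"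
    using lbot_notin_dismantling[OF assms(1,2) d1] ltop_notin_dismantling[OF assms(1,2) d1]
      finite_lattice_on_lbot(1)[OF assms(1,2)] finite_lattice_on_ltop(1)[OF assms(1,2)]
    by (simp_all add: S1)
  then have "dismantling (L - S1) a b"
    using dismantling_sublattice_trace[OF assms(1,2) sub d2 _ _ ab ival_ab[unfolded trace]] by blast
  with ab ival_ab show ?thesis
    unfolding is_interval_def dismantling_interval_def by blast
qed

end
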